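(* For every positive integer $k$, the $2$-adic valuation of $s_k$ equals $\mathrm{wt}(k)-1$, where $\mathrm{wt}(k)$ is the number of $1$'s in the binary expansion of $k$. Consequently $\nu_2(s_{2k})=\mathrm{wt}(k)-1$ and $\nu_2(s_{k,k})\geq \mathrm{wt}(k)-2$.
   Context: $\nu_2:\mathbb{Q}^\times\to\mathbb{Z}$ is the $2$-adic valuation, $\nu_2(x/y)=\nu_2(x)-\nu_2(y)$. For a partition $I=(i_1,\dots,i_r)$ of $k$, $s_I$ denotes the coefficient of $p_{i_1}\cdots p_{i_r}$ in the $k$-th Hirzebruch $\mathcal{L}$-polynomial $\mathcal{L}_k(p_1,\dots,p_k)=\sum_{|I|=k}s_Ip_I$ (multiplicative sequence with characteristic power series $\sqrt t/\tanh\sqrt t$). In particular $s_k=\frac{2^{2k}(2^{2k-1}-1)|B_{2k}|}{(2k)!}$ with $B_j$ the Bernoulli numbers, and $s_{k,k}=\tfrac12(s_k^2-s_{2k})$. *)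

theory Defs
  imports Complex_Main "HOL-Computational_Algebra.Computational_Algebra"
begin

text \<open>Bernoulli numbers (convention B_1 = -1/2; only |B_{2k}| is used):
  B_0 = 1 and  sum_{j=0}^{n} C(n+1,j) B_j = 0 for n \<ge> 1.\<close>
fun bernoulli :: "nat \<Rightarrow> rat" where
  "bernoulli n = (if n = 0 then 1
     else - (\<Sum>j<n. of_nat ((n + 1) choose j) * bernoulli j) / of_nat (n + 1))"

declare bernoulli.simps [simp del]

definition nu2 :: "rat \<Rightarrow> int" where
  "nu2 x = (case quotient_of x of (a, b) \<Rightarrow>
      int (multiplicity (2::int) a) - int (multiplicity (2::int) b))"

fun wt :: "nat \<Rightarrow> nat" where
  "wt n = (if n = 0 then 0 else n mod 2 + wt (n div 2))"

declare wt.simps [simp del]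

text \<open>s_k = 2^{2k} (2^{2k-1}-1) |B_{2k}| / (2k)!, the coefficient of p_k in L_k.\<close>
definition s :: "nat \<Rightarrow> rat" where
  "s k = 2 ^ (2 * k) * (2 ^ (2 * k - 1) - 1) * \<bar>bernoulli (2 * k)\<bar> / of_nat (fact (2 * k))"

text \<open>s_{k,k} = (s_k^2 - s_{2k}) / 2, the coefficient of p_k^2 in L_{2k}.\<close>
definition s2 :: "nat \<Rightarrow> rat" where
  "s2 k = (s k ^ 2 - s (2 * k)) / 2"

end

theory Submission
  imports Defs
begin

(* The recurrence for the Bernoulli numbers, together with B_n = 0 for odd n > 1, shows by
   induction that B_2k + 1/2 has odd denominator, so |B_2k| is half a 2-adic unit. Legendre's
   formula gives nu2((2k)!) = 2k - wt k, and 2^(2k-1) - 1 is odd; hence s_k = 2^(wt k - 1) u with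
   u a 2-adic unit, and likewise for s_2k because wt (2k) = wt k. Then
   2 s_kk = 2^(2w-2) u^2 - 2^(w-1) v: for w >= 2 this is 2^(w-1) times a unit, while for w = 1 the
   difference u^2 - v of two units is even. *)

lemma wt_double [simp]: "wt (2 * n) = wt n"
  by (subst wt.simps) (simp add: wt.simps)

lemma wt_Suc_double [simp]: "wt (Suc (2 * n)) = Suc (wt n)"
  by (subst wt.simps) simp

lemma wt_pos: "n > 0 \<Longrightarrow> wt n > 0"
proof (induction n rule: less_induct)
  case (less n)
  show ?case
  proof (cases "even n")
    case True
    then obtain m where "n = 2 * m" by blast
    with less show ?thesis by simp
  next
    case False
    then obtain m where "n = Suc (2 * m)" by (metis oddE Suc_eq_plus1)
    then show ?thesis by simp
  qed
qed

lemma wt_Suc: "wt (Suc n) + multiplicity 2 (Suc n) = Suc (wt n)"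
proof (induction n rule: less_induct)
  case (less n)
  show ?case
  proof (cases "even n")
    case True
    then obtain m where "n = 2 * m" by blast
    then show ?thesis by (simp add: not_dvd_imp_multiplicity_0)
  next
    case False
    then obtain m where n: "n = Suc (2 * m)" by (metis oddE Suc_eq_plus1)
    have "Suc n = 2 * Suc m" using n by simp
    then have "multiplicity 2 (Suc n) = Suc (multiplicity 2 (Suc m))"
      using multiplicity_times_same[of "Suc m" "2::nat"] by simp
    moreover have "wt (Suc n) = wt (Suc m)"
      using \<open>Suc n = 2 * Suc m\<close> by (metis wt_double)
    ultimately show ?thesis using less[of m] n by simp
  qed
qed

lemma multiplicity_two_fact: "multiplicity 2 (fact n :: nat) + wt n = n"
proof (induction n)
  case 0
  then show ?case by (simp add: wt.simps)
next
  case (Suc n)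
  have "multiplicity 2 (fact (Suc n) :: nat) = multiplicity 2 (Suc n) + multiplicity 2 (fact n :: nat)"
    unfolding fact_Suc of_nat_id by (rule prime_elem_multiplicity_mult_distrib) auto
  with Suc wt_Suc[of n] show ?case by simp
qed

lemma odd_imp_neq_0 [simp]: "odd (a :: 'a :: semiring_parity) \<Longrightarrow> a \<noteq> 0"
  by auto

definition two_integral :: "rat \<Rightarrow> bool" where
  "two_integral x \<longleftrightarrow> (\<exists>a b. odd b \<and> x = of_int a / of_int b)"

definition two_unit :: "rat \<Rightarrow> bool" where
  "two_unit x \<longleftrightarrow> (\<exists>a b. odd a \<and> odd b \<and> x = of_int a / of_int b)"

lemma nu2_of_int_divide:
  assumes "a \<noteq> 0" "b \<noteq> 0"
  shows "nu2 (of_int a / of_int b) = int (multiplicity 2 a) - int (multiplicity 2 b)"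
proof -
  obtain p q where pq: "quotient_of (of_int a / of_int b) = (p, q)" by fastforce
  have "q > 0" using pq quotient_of_denom_pos by blast
  have "of_int a / of_int b = (of_int p / of_int q :: rat)" using pq quotient_of_div by blast
  then have "p * b = a * q" using assms \<open>q > 0\<close> by (simp add: field_simps flip: of_int_mult)
  moreover have "p \<noteq> 0" using calculation assms \<open>q > 0\<close> by auto
  ultimately have "multiplicity 2 p + multiplicity 2 b = multiplicity 2 a + multiplicity (2::int) q"
    using assms \<open>q > 0\<close> by (simp flip: prime_elem_multiplicity_mult_distrib)
  then show ?thesis unfolding nu2_def pq by simp
qed

lemma nu2_nonneg:
  assumes "two_integral x"
  shows "nu2 x \<ge> 0"
proof -
  obtain a b where "odd b" and x: "x = of_int a / of_int b"
    using assms unfolding two_integral_def by blast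
  show ?thesis
  proof (cases "a = 0")
    case True
    then show ?thesis unfolding x by (simp add: nu2_def)
  next
    case False
    then show ?thesis unfolding x using \<open>odd b\<close> by (simp add: nu2_of_int_divide not_dvd_imp_multiplicity_0)
  qed
qed

lemma nu2_pow2_mult_two_unit:
  assumes "two_unit u"
  shows "nu2 (2 ^ e * u) = int e"
proof -
  obtain a b where "odd a" "odd b" and u: "u = of_int a / of_int b"
    using assms unfolding two_unit_def by blast
  then have "multiplicity 2 (2 ^ e * a) = e"
    by (simp add: prime_elem_multiplicity_mult_distrib not_dvd_imp_multiplicity_0)
  then show ?thesis
    using nu2_of_int_divide[of "2 ^ e * a" b] \<open>odd a\<close> \<open>odd b\<close> unfolding u
    by (simp add: not_dvd_imp_multiplicity_0)
qed

lemma two_integral_of_int [simp]: "two_integral (of_int a)"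
  unfolding two_integral_def by (rule exI[of _ a], rule exI[of _ 1]) simp

lemma two_integral_of_nat [simp]: "two_integral (of_nat n)"
  using two_integral_of_int[of "int n"] by simp

lemma two_integral_add:
  assumes "two_integral x" "two_integral y"
  shows "two_integral (x + y)"
proof -
  obtain a b c d where "odd b" "odd d" "x = of_int a / of_int b" "y = of_int c / of_int d"
    using assms unfolding two_integral_def by blast
  then have "x + y = of_int (a * d + c * b) / of_int (b * d)" "odd (b * d)"
    by (auto simp: field_simps)
  then show ?thesis unfolding two_integral_def by blast
qed

lemma two_integral_mult:
  assumes "two_integral x" "two_integral y"
  shows "two_integral (x * y)"
proof -
  obtain a b c d where "odd b" "odd d" "x = of_int a / of_int b" "y = of_int c / of_int d"
    using assms unfolding two_integral_def by blast
  then have "x * y = of_int (a * c) / of_int (b * d)" "odd (b * d)"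
    by auto
  then show ?thesis unfolding two_integral_def by blast
qed

lemma two_integral_minus: "two_integral x \<Longrightarrow> two_integral (- x)"
  using two_integral_mult[OF two_integral_of_int[of "- 1"], of x] by simp

lemma two_integral_diff: "two_integral x \<Longrightarrow> two_integral y \<Longrightarrow> two_integral (x - y)"
  using two_integral_add[of x "- y"] two_integral_minus[of y] by simp

lemma two_integral_0: "two_integral 0"
  using two_integral_of_int[of 0] by simp

lemma two_integral_sum: "(\<And>i. i \<in> A \<Longrightarrow> two_integral (f i)) \<Longrightarrow> two_integral (sum f A)"
  by (induction A rule: infinite_finite_induct) (auto simp: two_integral_0 two_integral_add)

lemma two_unit_imp_two_integral: "two_unit x \<Longrightarrow> two_integral x"
  unfolding two_unit_def two_integral_def by blast

lemma two_unit_of_int: "odd a \<Longrightarrow> two_unit (of_int a)"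
  unfolding two_unit_def by (rule exI[of _ a], rule exI[of _ 1]) simp

lemma two_unit_mult:
  assumes "two_unit x" "two_unit y"
  shows "two_unit (x * y)"
proof -
  obtain a b c d where "odd a" "odd b" "odd c" "odd d" "x = of_int a / of_int b" "y = of_int c / of_int d"
    using assms unfolding two_unit_def by blast
  then have "x * y = of_int (a * c) / of_int (b * d)" "odd (a * c)" "odd (b * d)"
    by auto
  then show ?thesis unfolding two_unit_def by blast
qed

lemma two_unit_inverse:
  assumes "two_unit x"
  shows "two_unit (inverse x)"
proof -
  obtain a b where "odd a" "odd b" "x = of_int a / of_int b"
    using assms unfolding two_unit_def by blast
  then have "inverse x = of_int b / of_int a" "odd b" "odd a" by simp_all
  then show ?thesis unfolding two_unit_def by blast
qed

lemma two_unit_divide: "two_unit x \<Longrightarrow> two_unit y \<Longrightarrow> two_unit (x / y)"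
  by (simp add: divide_inverse two_unit_mult two_unit_inverse)

lemma two_unit_abs:
  assumes "two_unit x"
  shows "two_unit \<bar>x\<bar>"
proof -
  obtain a b where "odd a" "odd b" "x = of_int a / of_int b"
    using assms unfolding two_unit_def by blast
  then have "\<bar>x\<bar> = of_int \<bar>a\<bar> / of_int \<bar>b\<bar>" "odd \<bar>a\<bar>" "odd \<bar>b\<bar>"
    by (simp_all add: abs_divide)
  then show ?thesis unfolding two_unit_def by blast
qed

lemma two_integral_divide: "two_integral x \<Longrightarrow> two_unit u \<Longrightarrow> two_integral (x / u)"
  by (simp add: divide_inverse two_integral_mult two_unit_imp_two_integral two_unit_inverse)

lemma two_unit_double_diff:
  assumes "two_integral x" "two_unit u"
  shows "two_unit (2 * x - u)"
proof -
  obtain a b c d where odd: "odd b" "odd c" "odd d"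
    and x: "x = of_int a / of_int b" and u: "u = of_int c / of_int d"
    using assms unfolding two_integral_def two_unit_def by blast
  have "2 * x - u = of_int (2 * a * d - c * b) / of_int (b * d)"
    unfolding x u using odd by (simp add: field_simps)
  moreover have "odd (2 * a * d - c * b)" "odd (b * d)" using odd by simp_all
  ultimately show ?thesis unfolding two_unit_def by blast
qed

lemma two_integral_half_diff:
  assumes "two_unit u" "two_unit v"
  shows "two_integral ((u - v) / 2)"
proof -
  obtain a b c d where odd: "odd a" "odd b" "odd c" "odd d"
    and u: "u = of_int a / of_int b" and v: "v = of_int c / of_int d"
    using assms unfolding two_unit_def by blast
  then have "even (a * d - c * b)" by simp
  then obtain m where m: "a * d - c * b = 2 * m" by blast
  have "(u - v) / 2 = of_int (a * d - c * b) / (2 * of_int (b * d))"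
    unfolding u v using odd by (simp add: field_simps)
  also have "\<dots> = of_int m / of_int (b * d)" unfolding m by simp
  finally have "(u - v) / 2 = of_int m / of_int (b * d)" .
  moreover have "odd (b * d)" using odd by simp
  ultimately show ?thesis unfolding two_integral_def by blast
qed

lemma of_nat_eq_pow2_mult_two_unit:
  assumes "n \<noteq> 0"
  obtains u where "two_unit u" "(of_nat n :: rat) = 2 ^ multiplicity 2 n * u"
proof -
  obtain m where m: "n = 2 ^ multiplicity 2 n * m" "odd m"
    using multiplicity_decompose'[of n 2] assms by auto
  have "(of_nat n :: rat) = 2 ^ multiplicity 2 n * of_int (int m)"
    using arg_cong[OF m(1), of "of_nat :: nat \<Rightarrow> rat"]
    by (simp only: of_nat_mult of_nat_power of_nat_numeral of_int_of_nat_eq)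
  moreover have "two_unit (of_int (int m))" using m(2) by (intro two_unit_of_int) simp
  ultimately show ?thesis using that by blast
qed

lemma sum_binomial_bernoulli:
  "(\<Sum>j<n. of_nat (n choose j) * bernoulli j) = (if n = 1 then 1 else 0)"
proof (cases n)
  case (Suc m)
  show ?thesis
  proof (cases "m = 0")
    case False
    have "bernoulli m = - (\<Sum>j<m. of_nat (Suc m choose j) * bernoulli j) / of_nat (Suc m)"
      using False by (subst bernoulli.simps) simp
    then show ?thesis using Suc False by simp
  qed (simp add: Suc bernoulli.simps)
qed simp

definition bernoulli_fps :: "rat fps" where
  "bernoulli_fps = Abs_fps (\<lambda>n. bernoulli n / fact n)"

lemma bernoulli_fps_mult_exp: "bernoulli_fps * (fps_exp 1 - 1) = fps_X"
proof (rule fps_ext)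
  fix n
  have "(bernoulli_fps * (fps_exp 1 - 1)) $ n = (\<Sum>i<n. bernoulli i / fact i / fact (n - i))"
    unfolding fps_mult_nth atLeast0AtMost lessThan_Suc_atMost[symmetric]
    by (simp add: bernoulli_fps_def ac_simps)
  also have "\<dots> = (\<Sum>i<n. of_nat (n choose i) * bernoulli i) / fact n"
    unfolding sum_divide_distrib by (intro sum.cong refl) (simp add: binomial_fact field_simps)
  also have "\<dots> = fps_X $ n"
    by (simp add: sum_binomial_bernoulli)
  finally show "(bernoulli_fps * (fps_exp 1 - 1)) $ n = fps_X $ n" .
qed

lemma bernoulli_fps_compose_uminus: "bernoulli_fps oo - fps_X = bernoulli_fps + fps_X"
proof -
  let ?B = bernoulli_fps and ?R = "bernoulli_fps oo - fps_X" and ?E = "fps_exp (1::rat)"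
  have reflected: "?R * (fps_exp (- 1) - 1) = - fps_X"
    using arg_cong[OF bernoulli_fps_mult_exp, of "\<lambda>f. f oo - fps_X"]
    by (simp add: fps_compose_mult_distrib fps_compose_sub_distrib)
  have "?E * fps_exp (- 1) = 1"
    using fps_exp_add_mult[of 1 "- 1 :: rat"] by simp
  then have "?R * (?E - 1) = ?E * ?R - (?E * fps_exp (- 1)) * ?R"
    by (simp add: algebra_simps)
  also have "\<dots> = - (?E * (?R * (fps_exp (- 1) - 1)))"
    by (simp add: algebra_simps)
  also have "\<dots> = (?B + fps_X) * (?E - 1)"
    unfolding reflected using bernoulli_fps_mult_exp by (simp add: algebra_simps)
  finally show ?thesis by simp
qed

lemma bernoulli_odd_eq_0:
  assumes "odd n" "n > 1"
  shows "bernoulli n = 0"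
proof -
  have "(bernoulli_fps oo - fps_X) $ n = (bernoulli_fps + fps_X) $ n"
    by (simp only: bernoulli_fps_compose_uminus)
  then show ?thesis using assms by (simp add: fps_compose_uminus' bernoulli_fps_def)
qed

lemma sum_even_binomial_less:
  assumes "even n" "n > 0"
  shows "(\<Sum>j<n. if even j then of_nat (Suc n choose j) else 0) = (2::rat) ^ n - of_nat (Suc n)"
proof -
  have "2 * (\<Sum>j\<le>Suc n. if even j then of_nat (Suc n choose j) else 0) = (2::rat) ^ Suc n"
    by (rule choose_even_sum) simp
  moreover have "(\<Sum>j\<le>Suc n. if even j then of_nat (Suc n choose j) else (0::rat))
      = (\<Sum>j<n. if even j then of_nat (Suc n choose j) else 0) + of_nat (Suc n)"
    using assms by (simp add: lessThan_Suc_atMost[symmetric])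
  ultimately show ?thesis by simp
qed

lemma bernoulli_even_recurrence:
  assumes "m > 0"
  shows "of_nat (Suc (2 * m)) * (bernoulli (2 * m) + 1 / 2)
    = 2 ^ (2 * m - 1) + of_nat m - 1
      - (\<Sum>j<2 * m. if 2 \<le> j \<and> even j then of_nat (Suc (2 * m) choose j) * (bernoulli j + 1 / 2) else 0)"
proof -
  define n where "n = 2 * m"
  define C where "C j = (of_nat (Suc n choose j) :: rat)" for j
  \<comment> \<open>B_j = t j + c j, where c j is 2-integral by induction and the t-part has a closed-form sum\<close>
  define t :: "nat \<Rightarrow> rat" where
    "t j = - 1 / 2 * (if even j then 1 else 0) + (if j = 0 then 3 / 2 else 0) - (if j = 1 then 1 / 2 else 0)" for j
  define c where "c j = (if 2 \<le> j \<and> even j then bernoulli j + 1 / 2 else 0)" for j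
  have n: "even n" "n > 1" using assms by (auto simp: n_def)
  have "bernoulli 1 = - 1 / 2"
    by (simp add: bernoulli.simps)
  then have split: "bernoulli j = t j + c j" for j
    using bernoulli_odd_eq_0[of j]
    by (cases "j = 0 \<or> j = 1") (auto simp: t_def c_def bernoulli.simps[of 0])
  have "(\<Sum>j<n. C j * t j)
      = - 1 / 2 * (\<Sum>j<n. if even j then C j else 0)
        + (\<Sum>j<n. if j = 0 then 3 / 2 * C j else 0) - (\<Sum>j<n. if j = 1 then 1 / 2 * C j else 0)"
    unfolding t_def sum_distrib_left sum.distrib[symmetric] sum_subtractf[symmetric]
    by (intro sum.cong refl) (auto simp: algebra_simps)
  also have "\<dots> = 3 / 2 - 2 ^ n / 2"
    using n sum_even_binomial_less[of n] unfolding C_def by (simp add: field_simps)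
  finally have sum_t: "(\<Sum>j<n. C j * t j) = 3 / 2 - 2 ^ n / 2" .
  have "0 = (\<Sum>j<Suc n. C j * bernoulli j)"
    using n by (simp add: C_def sum_binomial_bernoulli)
  also have "\<dots> = (\<Sum>j<Suc n. C j * t j) + (\<Sum>j<Suc n. C j * c j)"
    unfolding split distrib_left sum.distrib ..
  also have "\<dots> = (\<Sum>j<n. C j * t j) + (\<Sum>j<n. C j * c j) + of_nat (Suc n) * bernoulli n"
    using n by (simp add: C_def t_def c_def algebra_simps)
  finally have "of_nat (Suc n) * bernoulli n = 2 ^ n / 2 - 3 / 2 - (\<Sum>j<n. C j * c j)"
    unfolding sum_t by (simp add: algebra_simps)
  moreover have "(2::rat) ^ n = 2 * 2 ^ (2 * m - 1)"
    using assms by (simp add: n_def flip: power_Suc)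
  moreover have "(\<Sum>j<n. C j * c j) = (\<Sum>j<n. if 2 \<le> j \<and> even j then C j * (bernoulli j + 1 / 2) else 0)"
    unfolding c_def by (intro sum.cong refl) simp
  ultimately show ?thesis unfolding n_def C_def by (simp add: algebra_simps)
qed

lemma two_integral_bernoulli_even:
  assumes "even n" "n \<ge> 2"
  shows "two_integral (bernoulli n + 1 / 2)"
  using assms
proof (induction n rule: less_induct)
  case (less n)
  then obtain m where n: "n = 2 * m" "m > 0" by (auto elim!: evenE)
  let ?S = "\<Sum>j<2 * m. if 2 \<le> j \<and> even j then of_nat (Suc (2 * m) choose j) * (bernoulli j + 1 / 2) else 0"
  have "two_integral ?S"
    using less.IH n by (intro two_integral_sum) (simp add: two_integral_0 two_integral_mult)
  then have "two_integral (2 ^ (2 * m - 1) + of_nat m - 1 - ?S)"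
    using two_integral_of_int[of "2 ^ (2 * m - 1) + int m - 1"] by (simp add: two_integral_diff)
  then have "two_integral (of_nat (Suc n) * (bernoulli n + 1 / 2) / of_nat (Suc n))"
    unfolding n(1) bernoulli_even_recurrence[OF n(2)]
    by (rule two_integral_divide) (use two_unit_of_int[of "int (Suc (2 * m))"] in simp)
  then show ?case by simp
qed

lemma abs_bernoulli_even_eq_half_two_unit:
  assumes "k > 0"
  obtains u where "two_unit u" "\<bar>bernoulli (2 * k)\<bar> = u / 2"
proof
  let ?x = "bernoulli (2 * k) + 1 / 2"
  have "two_unit (2 * ?x - 1)"
    using two_unit_double_diff[OF two_integral_bernoulli_even two_unit_of_int[of 1]] assms by simp
  then show "two_unit \<bar>2 * ?x - 1\<bar>" by (rule two_unit_abs)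
  show "\<bar>bernoulli (2 * k)\<bar> = \<bar>2 * ?x - 1\<bar> / 2" by (simp add: algebra_simps)
qed

lemma s_eq_pow2_mult_two_unit:
  assumes "k > 0"
  obtains u where "two_unit u" "s k = 2 ^ (wt k - 1) * u"
proof -
  define w where "w = wt k"
  obtain v where v: "two_unit v" "\<bar>bernoulli (2 * k)\<bar> = v / 2"
    using abs_bernoulli_even_eq_half_two_unit[OF assms] .
  have legendre: "multiplicity 2 (fact (2 * k) :: nat) = 2 * k - w" and "w \<ge> 1"
    using multiplicity_two_fact[of "2 * k"] wt_pos[OF assms] by (simp_all add: w_def)
  have "fact (2 * k) \<noteq> (0::nat)" by simp
  then obtain c where c: "two_unit c" "of_nat (fact (2 * k)) = (2::rat) ^ (2 * k - w) * c"
    unfolding legendre[symmetric] by (rule of_nat_eq_pow2_mult_two_unit)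
  have odd_factor: "(2::rat) ^ (2 * k - 1) - 1 = of_int (2 ^ (2 * k - 1) - 1)" "odd ((2::int) ^ (2 * k - 1) - 1)"
    using assms by simp_all
  have "(2::rat) ^ (2 * k) = 2 ^ (w - 1) * (2 * 2 ^ (2 * k - w))"
    using legendre \<open>w \<ge> 1\<close> multiplicity_two_fact[of "2 * k"]
    by (simp add: w_def flip: power_Suc power_add)
  then have "s k = 2 ^ (w - 1) * (2 * 2 ^ (2 * k - w)) * of_int (2 ^ (2 * k - 1) - 1) * (v / 2)
      / (2 ^ (2 * k - w) * c)"
    unfolding s_def v(2) c(2) odd_factor(1) by simp
  also have "\<dots> = 2 ^ (w - 1) * (of_int (2 ^ (2 * k - 1) - 1) * v / c)"
    by (cases "c = 0") (simp_all add: field_simps)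
  finally have "s k = 2 ^ (w - 1) * (of_int (2 ^ (2 * k - 1) - 1) * v / c)" .
  moreover have "two_unit (of_int (2 ^ (2 * k - 1) - 1) * v / c)"
    using odd_factor(2) v(1) c(1) by (intro two_unit_divide two_unit_mult two_unit_of_int)
  ultimately show ?thesis using that unfolding w_def by blast
qed

lemma nu2_s:
  assumes "k > 0"
  shows "nu2 (s k) = int (wt k) - 1"
proof -
  obtain u where "two_unit u" "s k = 2 ^ (wt k - 1) * u"
    using s_eq_pow2_mult_two_unit[OF assms] .
  then show ?thesis using wt_pos[OF assms] by (simp add: nu2_pow2_mult_two_unit of_nat_diff)
qed

lemma nu2_s2_ge:
  assumes "k > 0"
  shows "nu2 (s2 k) \<ge> int (wt k) - 2"
proof -
  define w where "w = wt k"
  obtain u1 where u1: "two_unit u1" "s k = 2 ^ (w - 1) * u1"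
    using s_eq_pow2_mult_two_unit[OF assms] unfolding w_def .
  obtain u2 where u2: "two_unit u2" "s (2 * k) = 2 ^ (w - 1) * u2"
    using s_eq_pow2_mult_two_unit[of "2 * k"] assms unfolding w_def by auto
  have "w \<ge> 1" using wt_pos[OF assms] by (simp add: w_def)
  have "two_unit (u1 ^ 2)" using two_unit_mult[OF u1(1) u1(1)] by (simp add: power2_eq_square)
  show ?thesis
  proof (cases "w = 1")
    case True
    then have "s2 k = (u1 ^ 2 - u2) / 2" unfolding s2_def u1(2) u2(2) by simp
    then have "two_integral (s2 k)"
      using two_integral_half_diff[OF \<open>two_unit (u1 ^ 2)\<close> u2(1)] by (simp only:)
    then have "nu2 (s2 k) \<ge> 0" by (rule nu2_nonneg)
    then show ?thesis using True by (simp add: w_def)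
  next
    case False
    define d where "d = w - 2"
    have w: "w = d + 2" using False \<open>w \<ge> 1\<close> by (simp add: d_def)
    have "s2 k = 2 ^ d * (2 * (2 ^ d * u1 ^ 2) - u2)"
      unfolding s2_def u1(2) u2(2) w by (simp add: power2_eq_square field_simps)
    moreover have "two_integral (2 ^ d * u1 ^ 2)"
      using two_integral_of_nat[of "2 ^ d"] two_unit_imp_two_integral[OF \<open>two_unit (u1 ^ 2)\<close>]
      by (simp add: two_integral_mult)
    then have "two_unit (2 * (2 ^ d * u1 ^ 2) - u2)"
      using u2(1) by (rule two_unit_double_diff)
    ultimately show ?thesis by (simp add: nu2_pow2_mult_two_unit w_def[symmetric] w)
  qed
qed

theorem mainTheorem3:
  fixes k :: nat
  assumes "k > 0"
  shows "nu2 (s k) = int (wt k) - 1 \<and> nu2 (s (2 * k)) = int (wt k) - 1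
         \<and> nu2 (s2 k) \<ge> int (wt k) - 2"
  using nu2_s[OF assms] nu2_s[of "2 * k"] nu2_s2_ge[OF assms] assms by simp

end
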